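(* Let $n\ge 2$ and let $c:E_n\to\mathbb{C}$ be an admissible edge weighting of $Q_n$. Let $x_1,x_2,y_1,y_2$ be vertices of $Q_n$ inducing a $4$-cycle with edges $e=\{x_1,y_1\}$, $f=\{y_1,x_2\}$, $g=\{x_2,y_2\}$, $h=\{y_2,x_1\}$. (1) If $c(e)\ne0$ and $c(f)\ne0$, then also $c(g)\neq 0$ and $c(h)\ne0$, and $\frac{c(e)}{c(f)} = -\overline{\left(\frac{c(g)}{c(h)}\right)}$. (2) In that case, $|c(e)|=|c(g)|$ and $|c(f)|=|c(h)|$. (3) The subgraph $Q_n(c)\subset Q_n$ is a disjoint union of sub-hypercubes.
   Context: For $n\ge1$, identify integers $0\le i<2^n$ with their $n$-digit binary representations; $i\#k$ is $i$ with its $k$-th digit flipped. The hypercube $Q_n$ has vertex classes $U_n$ (even number of $1$'s) and $V_n$ (odd number of $1$'s), with edge set $E_n$ consisting of pairs $ij$, $i\in U_n$, $j\in V_n$, $j = i\#k$ for some $k<n$; $\mathcal{N}(x)$ is the set of neighbors of $x$. For $c:E_n\to\mathbb{C}$, $Q_n(c)=(U_n(c),V_n(c),E_n(c))$ is the subgraph consisting of the edges $ij$ with $c(ij)\ne0$ and their endpoints. $c$ is admissible if $\sum_{i\in\mathcal{N}(j_1)\cap\mathcal{N}(j_2)} c(ij_1)\overline{c(ij_2)} = \delta_{j_1j_2}$ for all $j_1,j_2\in V_n(c)$ and $\sum_{j\in\mathcal{N}(i_1)\cap\mathcal{N}(i_2)} c(i_1j)\overline{c(i_2j)} = \delta_{i_1i_2}$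 for all $i_1,i_2\in U_n(c)$. A sub-hypercube of $Q_n$ is, for a set $K\subseteq\{0,\dots,n-1\}$ and a vertex $a$, the subgraph induced by all vertices agreeing with $a$ in every binary digit outside $K$. *)

theory Defs
  imports Complex_Main
begin

(* Vertices of Q_n: naturals i < 2^n; binary digit k of i is  bit i k. *)

definition flip :: "nat \<Rightarrow> nat \<Rightarrow> nat" where
  "flip i k = (if bit i k then i - 2 ^ k else i + 2 ^ k)"

definition ones :: "nat \<Rightarrow> nat \<Rightarrow> nat" where
  "ones n i = card {k. k < n \<and> bit i k}"

definition Uv :: "nat \<Rightarrow> nat set" where
  "Uv n = {i. i < 2 ^ n \<and> even (ones n i)}"

definition Vv :: "nat \<Rightarrow> nat set" where
  "Vv n = {i. i < 2 ^ n \<and> odd (ones n i)}"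

definition adj :: "nat \<Rightarrow> nat \<Rightarrow> nat \<Rightarrow> bool" where
  "adj n i j \<longleftrightarrow> i < 2 ^ n \<and> j < 2 ^ n \<and> (\<exists>k<n. j = flip i k)"

definition nbrs :: "nat \<Rightarrow> nat \<Rightarrow> nat set" where
  "nbrs n x = {y. adj n x y}"

definition Ed :: "nat \<Rightarrow> nat set set" where
  "Ed n = {{i, j} | i j. i \<in> Uv n \<and> j \<in> Vv n \<and> (\<exists>k<n. j = flip i k)}"

(* Q_n(c) for an edge weighting c (only its values on Ed n matter) *)
definition Ec :: "nat \<Rightarrow> (nat set \<Rightarrow> complex) \<Rightarrow> nat set set" where
  "Ec n c = {e \<in> Ed n. c e \<noteq> 0}"

definition Uc :: "nat \<Rightarrow> (nat set \<Rightarrow> complex) \<Rightarrow> nat set" where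
  "Uc n c = Uv n \<inter> \<Union> (Ec n c)"

definition Vc :: "nat \<Rightarrow> (nat set \<Rightarrow> complex) \<Rightarrow> nat set" where
  "Vc n c = Vv n \<inter> \<Union> (Ec n c)"

definition admissible :: "nat \<Rightarrow> (nat set \<Rightarrow> complex) \<Rightarrow> bool" where
  "admissible n c \<longleftrightarrow>
     (\<forall>j1\<in>Vc n c. \<forall>j2\<in>Vc n c.
        (\<Sum>i\<in>nbrs n j1 \<inter> nbrs n j2. c {i, j1} * cnj (c {i, j2})) = (if j1 = j2 then 1 else 0)) \<and>
     (\<forall>i1\<in>Uc n c. \<forall>i2\<in>Uc n c.
        (\<Sum>j\<in>nbrs n i1 \<inter> nbrs n i2. c {i1, j} * cnj (c {i2, j})) = (if i1 = i2 then 1 else 0))"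

definition subcube :: "nat \<Rightarrow> nat set \<Rightarrow> nat \<Rightarrow> nat set" where
  "subcube n K a = {v. v < 2 ^ n \<and> (\<forall>k<n. k \<notin> K \<longrightarrow> bit v k = bit a k)}"

definition ind_edges :: "nat \<Rightarrow> nat set \<Rightarrow> nat set set" where
  "ind_edges n S = {e \<in> Ed n. e \<subseteq> S}"

end

theory Submission
  imports Defs
begin

(* In a 4-cycle x1 y1 x2 y2 of Q_n, y1 and y2 are the only common neighbours of x1 and x2, and
   vice versa.  So the orthogonality relations of admissibility at x1, x2 and at y1, y2 read
   c(e) c(f)* + c(h) c(g)* = 0  and  c(e) c(h)* + c(f) c(g)* = 0,  which force parts (1) and (2).
   By (1), if k is the direction of an edge of Q_n(c) at v, then every direction of an edge of
   Q_n(c) at v is also one at v#k.  So the set of these directions is constant along Q_n(c),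
   hence on the sub-hypercube it spans at v, and these sub-hypercubes partition Q_n(c). *)

lemma flip_eq_flip_bit: "flip i k = flip_bit k i"
proof (cases "bit i k")
  case True
  have "i = set_bit k (unset_bit k i)"
    using True by (auto intro: bit_eqI simp: bit_simps)
  then have "i = unset_bit k i + 2 ^ k"
    by (metis bit_unset_bit_iff of_bool_eq(2) mult_1 set_bit_eq)
  then show ?thesis
    using True by (simp add: flip_def flip_bit_eq_if)
next
  case False
  then show ?thesis by (simp add: flip_def flip_bit_eq_if set_bit_eq)
qed

lemma bit_flip_iff: "bit (flip i k) j \<longleftrightarrow> bit i j \<noteq> (j = k)"
  by (auto simp: flip_eq_flip_bit bit_flip_bit_iff)

lemma flip_flip [simp]: "flip (flip i k) k = i"
  by (rule bit_eqI) (auto simp: bit_flip_iff)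

lemma flip_commute: "flip (flip i a) b = flip (flip i b) a"
  by (rule bit_eqI) (auto simp: bit_flip_iff)

lemma flip_eq_flip_iff [simp]: "flip i a = flip i b \<longleftrightarrow> a = b"
  by (metis bit_flip_iff)

lemma flip_neq [simp]: "flip i k \<noteq> i" "i \<noteq> flip i k"
  by (metis bit_flip_iff)+

lemma flip_cancel [simp]: "flip i k = flip j k \<longleftrightarrow> i = j"
  by (metis flip_flip)

lemma flip_flip_eq_flip_flipD:
  assumes "a \<noteq> b" and eq: "flip (flip x a) b = flip (flip x p) q"
  shows "p = a \<and> q = b \<or> p = b \<and> q = a"
proof -
  have "bit (flip (flip x a) b) j = bit (flip (flip x p) q) j" for j
    using eq by simp
  then have "(j = a) \<noteq> (j = b) \<longleftrightarrow> (j = p) \<noteq> (j = q)" for j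
    by (auto simp: bit_flip_iff)
  from this[of a] this[of b] show ?thesis
    using assms(1) by blast
qed

lemma distinct_flip_square:
  assumes "a \<noteq> b" shows "distinct [flip v a, flip v b, v, flip (flip v a) b]"
proof -
  have "flip (flip v a) b \<noteq> v"
    by (metis assms flip_flip flip_eq_flip_iff)
  then show ?thesis
    using assms by (auto simp: flip_commute[of v a b])
qed

lemma less_power_iff_bits: "(i::nat) < 2 ^ n \<longleftrightarrow> (\<forall>j. bit i j \<longrightarrow> j < n)"
  by (metis take_bit_nat_eq_self_iff bit_eq_iff bit_take_bit_iff)

lemma flip_less_power: "i < 2 ^ n \<Longrightarrow> k < n \<Longrightarrow> flip i k < 2 ^ n"
  by (auto simp: less_power_iff_bits bit_flip_iff)

lemma odd_ones_flip_iff: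
  assumes "k < n" shows "odd (ones n (flip i k)) \<longleftrightarrow> even (ones n i)"
proof -
  let ?S = "{j. j < n \<and> bit i j}"
  have "finite ?S" by simp
  moreover have "{j. j < n \<and> bit (flip i k) j} = (if k \<in> ?S then ?S - {k} else insert k ?S)"
    using assms by (auto simp: bit_flip_iff)
  ultimately show ?thesis
    unfolding ones_def by (cases "k \<in> ?S") (auto simp: card_gt_0_iff)
qed

lemma adj_sym: "adj n a b \<Longrightarrow> adj n b a"
  unfolding adj_def by (metis flip_flip)

lemma adj_flip: "v < 2 ^ n \<Longrightarrow> k < n \<Longrightarrow> adj n v (flip v k)"
  unfolding adj_def using flip_less_power by blast

lemma Vv_iff: "i \<in> Vv n \<longleftrightarrow> i < 2 ^ n \<and> i \<notin> Uv n"
  by (auto simp: Uv_def Vv_def)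

lemma flip_mem_Uv_iff: "i < 2 ^ n \<Longrightarrow> k < n \<Longrightarrow> flip i k \<in> Uv n \<longleftrightarrow> i \<notin> Uv n"
  using odd_ones_flip_iff[of k n i] by (auto simp: Uv_def flip_less_power)

lemma adj_Uv_iff: "adj n a b \<Longrightarrow> b \<in> Uv n \<longleftrightarrow> a \<notin> Uv n"
  unfolding adj_def using flip_mem_Uv_iff by blast

lemma mem_Ed_iff: "e \<in> Ed n \<longleftrightarrow> (\<exists>a k. a < 2 ^ n \<and> k < n \<and> e = {a, flip a k})"
proof
  assume "e \<in> Ed n"
  then obtain a k where "a \<in> Uv n" "k < n" "e = {a, flip a k}"
    unfolding Ed_def by blast
  then show "\<exists>a k. a < 2 ^ n \<and> k < n \<and> e = {a, flip a k}"
    unfolding Uv_def by blast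
next
  have edge: "{i, flip i k} \<in> Ed n" if "i \<in> Uv n" "flip i k \<in> Vv n" "k < n" for i k
    unfolding Ed_def using that by blast
  assume "\<exists>a k. a < 2 ^ n \<and> k < n \<and> e = {a, flip a k}"
  then obtain a k where a: "a < 2 ^ n" and k: "k < n" and e: "e = {a, flip a k}"
    by blast
  show "e \<in> Ed n"
  proof (cases "a \<in> Uv n")
    case True
    then show ?thesis
      using edge[OF True _ k] a k e flip_mem_Uv_iff[OF a k] flip_less_power Vv_iff by simp
  next
    case False
    then have "flip a k \<in> Uv n" "flip (flip a k) k \<in> Vv n"
      using a k flip_mem_Uv_iff Vv_iff by auto
    then show ?thesis
      using edge[of "flip a k" k] k e by (simp add: insert_commute)
  qed
qed

definition active_dirs :: "nat \<Rightarrow> (nat set \<Rightarrow> complex) \<Rightarrow> nat \<Rightarrow> nat set" where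
  "active_dirs n c v = {k. k < n \<and> c {v, flip v k} \<noteq> 0}"

lemma active_dirs_subset: "active_dirs n c v \<subseteq> {..<n}"
  by (auto simp: active_dirs_def)

lemma Uc_Un_Vc_eq: "Uc n c \<union> Vc n c = {v. v < 2 ^ n \<and> active_dirs n c v \<noteq> {}}"
proof (intro set_eqI iffI)
  fix v
  assume "v \<in> Uc n c \<union> Vc n c"
  then obtain e where e: "e \<in> Ed n" "c e \<noteq> 0" "v \<in> e"
    unfolding Uc_def Vc_def Ec_def by blast
  then obtain a k where a: "a < 2 ^ n" "k < n" "e = {a, flip a k}"
    by (auto simp: mem_Ed_iff)
  then have "v < 2 ^ n" "e = {v, flip v k}"
    using e(3) flip_less_power by (auto simp: insert_commute)
  then show "v \<in> {v. v < 2 ^ n \<and> active_dirs n c v \<noteq> {}}"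
    using a(2) e(2) by (auto simp: active_dirs_def)
next
  fix v
  assume "v \<in> {v. v < 2 ^ n \<and> active_dirs n c v \<noteq> {}}"
  then obtain k where "v < 2 ^ n" "k < n" "c {v, flip v k} \<noteq> 0"
    by (auto simp: active_dirs_def)
  then have "{v, flip v k} \<in> Ec n c" "v < 2 ^ n"
    by (auto simp: Ec_def mem_Ed_iff)
  then show "v \<in> Uc n c \<union> Vc n c"
    unfolding Uc_def Vc_def using Vv_iff by blast
qed

lemma mem_Uc_Vc_if_adj: "adj n v w \<Longrightarrow> c {v, w} \<noteq> 0 \<Longrightarrow> v \<in> Uc n c \<union> Vc n c"
  unfolding adj_def Uc_Un_Vc_eq active_dirs_def by blast

lemma nbrs_inter_four_cycle:
  assumes distinct: "distinct [x1, x2, y1, y2]"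
    and "adj n x1 y1" "adj n y1 x2" "adj n x2 y2" "adj n y2 x1"
  shows "nbrs n x1 \<inter> nbrs n x2 = {y1, y2}"
proof
  show "{y1, y2} \<subseteq> nbrs n x1 \<inter> nbrs n x2"
    unfolding nbrs_def using assms adj_sym by blast
next
  have flip_of_adj: "\<exists>k. w = flip v k" if "adj n v w" for v w
    using that unfolding adj_def by blast
  obtain a b d e where y1: "y1 = flip x1 a" and x2: "x2 = flip y1 b"
    and y2: "y2 = flip x1 d" and x2': "x2 = flip y2 e"
    using flip_of_adj assms(2-5) adj_sym by meson
  have "a \<noteq> b"
    using distinct x2 y1 by auto
  then have "d = b"
    using flip_flip_eq_flip_flipD[of a b x1 d e] distinct x2 x2' y1 y2 by auto
  show "nbrs n x1 \<inter> nbrs n x2 \<subseteq> {y1, y2}"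
  proof
    fix z
    assume "z \<in> nbrs n x1 \<inter> nbrs n x2"
    then obtain p q where z: "z = flip x1 p" and "x2 = flip z q"
      unfolding nbrs_def using flip_of_adj adj_sym by blast
    then have "p = a \<or> p = b"
      using flip_flip_eq_flip_flipD[OF \<open>a \<noteq> b\<close>, of x1 p q] x2 y1 by auto
    then show "z \<in> {y1, y2}"
      using y1 y2 z \<open>d = b\<close> by auto
  qed
qed

lemma four_cycle_weight_relations:
  fixes e f g h :: complex
  assumes nonzero: "e \<noteq> 0" "f \<noteq> 0" "g \<noteq> 0" "h \<noteq> 0"
    and rel1: "e * cnj f + h * cnj g = 0" and rel2: "e * cnj h + f * cnj g = 0"
  shows "e / f = - cnj (g / h)" and "cmod e = cmod g" and "cmod f = cmod h"
proof -
  have "e * cnj h = - (f * cnj g)"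
    using rel2 by (simp add: eq_neg_iff_add_eq_0)
  then show "e / f = - cnj (g / h)"
    using nonzero by (simp add: field_simps complex_cnj_divide)
  have EF: "cmod e * cmod f = cmod g * cmod h" and EH: "cmod e * cmod h = cmod g * cmod f"
    using arg_cong[OF rel1[unfolded add_eq_0_iff], of cmod]
      arg_cong[OF rel2[unfolded add_eq_0_iff], of cmod]
    by (simp_all add: norm_mult mult.commute)
  have "cmod e ^ 2 * (cmod f * cmod h) = cmod g ^ 2 * (cmod f * cmod h)"
    using arg_cong2[OF EF EH, of "(*)"] by (simp add: power2_eq_square ac_simps)
  then show "cmod e = cmod g"
    using nonzero by (simp add: power2_eq_iff_nonneg)
  then show "cmod f = cmod h"
    using EF nonzero by (simp add: mult.commute)
qed

lemma admissible_orthogonal: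
  assumes adm: "admissible n c"
    and p: "p \<in> Uc n c \<union> Vc n c" and q: "q \<in> Uc n c \<union> Vc n c"
    and "p \<noteq> q" and same_side: "p \<in> Uv n \<longleftrightarrow> q \<in> Uv n"
  shows "(\<Sum>z\<in>nbrs n p \<inter> nbrs n q. c {p, z} * cnj (c {q, z})) = 0"
proof (cases "p \<in> Uv n")
  case True
  then have "p \<in> Uc n c" "q \<in> Uc n c"
    using p q same_side by (auto simp: Uc_def Vc_def Vv_iff)
  then show ?thesis
    using adm \<open>p \<noteq> q\<close> unfolding admissible_def by auto
next
  case False
  then have "p \<in> Vc n c" "q \<in> Vc n c"
    using p q same_side by (auto simp: Uc_def)
  then have "(\<Sum>z\<in>nbrs n p \<inter> nbrs n q. c {z, p} * cnj (c {z, q})) = 0"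
    using adm \<open>p \<noteq> q\<close> unfolding admissible_def by auto
  then show ?thesis
    by (simp add: insert_commute)
qed

lemma admissible_four_cycle:
  assumes adm: "admissible n c" and distinct: "distinct [x1, x2, y1, y2]"
    and adj: "adj n x1 y1" "adj n y1 x2" "adj n x2 y2" "adj n y2 x1"
    and nonzero: "c {x1, y1} \<noteq> 0" "c {y1, x2} \<noteq> 0"
  shows "c {x2, y2} \<noteq> 0 \<and> c {y2, x1} \<noteq> 0 \<and>
    c {x1, y1} / c {y1, x2} = - cnj (c {x2, y2} / c {y2, x1}) \<and>
    cmod (c {x1, y1}) = cmod (c {x2, y2}) \<and> cmod (c {y1, x2}) = cmod (c {y2, x1})"
proof -
  define e f g h where "e = c {x1, y1}" "f = c {y1, x2}" "g = c {x2, y2}" "h = c {y2, x1}"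
  have x1: "x1 \<in> Uc n c \<union> Vc n c" and x2: "x2 \<in> Uc n c \<union> Vc n c"
    using mem_Uc_Vc_if_adj[of n, OF adj(1)] mem_Uc_Vc_if_adj[of n, OF adj_sym[OF adj(2)]]
      nonzero by (auto simp: insert_commute)
  have "(\<Sum>z\<in>nbrs n x1 \<inter> nbrs n x2. c {x1, z} * cnj (c {x2, z})) = 0"
    using admissible_orthogonal[OF adm x1 x2] distinct
      adj_Uv_iff[OF adj(1)] adj_Uv_iff[OF adj(2)] by auto
  then have rel1: "e * cnj f + h * cnj g = 0"
    using distinct unfolding nbrs_inter_four_cycle[OF distinct adj]
    by (simp add: e_f_g_h_def insert_commute)
  then have "h \<noteq> 0" "g \<noteq> 0"
    using nonzero by (auto simp: e_f_g_h_def)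
  have y1: "y1 \<in> Uc n c \<union> Vc n c" and y2: "y2 \<in> Uc n c \<union> Vc n c"
    using mem_Uc_Vc_if_adj[of n, OF adj_sym[OF adj(1)]] mem_Uc_Vc_if_adj[of n, OF adj(4)]
      nonzero(1) \<open>h \<noteq> 0\<close> by (auto simp: e_f_g_h_def insert_commute)
  have "(\<Sum>z\<in>nbrs n y1 \<inter> nbrs n y2. c {y1, z} * cnj (c {y2, z})) = 0"
    using admissible_orthogonal[OF adm y1 y2] distinct
      adj_Uv_iff[OF adj(1)] adj_Uv_iff[OF adj(4)] by auto
  moreover have "nbrs n y1 \<inter> nbrs n y2 = {x1, x2}"
    using distinct adj adj_sym by (intro nbrs_inter_four_cycle) auto
  ultimately have rel2: "e * cnj h + f * cnj g = 0"
    using distinct by (simp add: e_f_g_h_def insert_commute)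
  show ?thesis
    using four_cycle_weight_relations[OF _ _ \<open>g \<noteq> 0\<close> \<open>h \<noteq> 0\<close> rel1 rel2]
      \<open>g \<noteq> 0\<close> \<open>h \<noteq> 0\<close> nonzero by (simp add: e_f_g_h_def)
qed

lemma active_dirs_flip_subset:
  assumes adm: "admissible n c" and v: "v < 2 ^ n" and k: "k \<in> active_dirs n c v"
  shows "active_dirs n c v \<subseteq> active_dirs n c (flip v k)"
proof
  fix b
  assume b: "b \<in> active_dirs n c v"
  have kn: "k < n" and bn: "b < n" and ck: "c {v, flip v k} \<noteq> 0" and cb: "c {v, flip v b} \<noteq> 0"
    using k b by (auto simp: active_dirs_def)
  show "b \<in> active_dirs n c (flip v k)"
  proof (cases "b = k")
    case True
    then show ?thesis
      using kn ck by (simp add: active_dirs_def insert_commute)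
  next
    case False
    define w where "w = flip v k"
    have w: "w < 2 ^ n" and vb: "flip v b < 2 ^ n"
      using v kn bn by (simp_all add: w_def flip_less_power)
    have adj: "adj n w v" "adj n v (flip v b)" "adj n (flip v b) (flip w b)" "adj n (flip w b) w"
      using adj_flip[OF v kn] adj_flip[OF v bn] adj_flip[OF vb kn] adj_flip[OF w bn]
      by (simp_all add: w_def adj_sym flip_commute[of v k b])
    have "distinct [w, flip v b, v, flip w b]"
      unfolding w_def using False by (intro distinct_flip_square) simp
    moreover have "c {w, v} \<noteq> 0"
      using ck by (simp add: w_def insert_commute)
    ultimately have "c {flip w b, w} \<noteq> 0"
      using admissible_four_cycle[OF adm _ adj] cb by blast
    then show ?thesis
      using bn by (simp add: active_dirs_def insert_commute w_def)
  qed
qed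

lemma active_dirs_flip:
  assumes adm: "admissible n c" and v: "v < 2 ^ n" and k: "k \<in> active_dirs n c v"
  shows "active_dirs n c (flip v k) = active_dirs n c v"
proof
  show "active_dirs n c v \<subseteq> active_dirs n c (flip v k)"
    using adm v k by (rule active_dirs_flip_subset)
  have "k < n"
    using k by (simp add: active_dirs_def)
  moreover have "k \<in> active_dirs n c (flip v k)"
    using k by (simp add: active_dirs_def insert_commute)
  ultimately show "active_dirs n c (flip v k) \<subseteq> active_dirs n c v"
    using active_dirs_flip_subset[OF adm flip_less_power[OF v]] by fastforce
qed

lemma active_dirs_eq_if_differences_subset:
  assumes adm: "admissible n c" and "finite F" and "F \<subseteq> active_dirs n c v"
    and "w < 2 ^ n" and "{j. bit v j \<noteq> bit w j} \<subseteq> F"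
  shows "active_dirs n c w = active_dirs n c v"
  using assms(2-)
proof (induction F arbitrary: w rule: finite_induct)
  case empty
  then have "w = v"
    by (auto intro: bit_eqI)
  then show ?case by simp
next
  case (insert k F)
  show ?case
  proof (cases "bit w k = bit v k")
    case True
    then show ?thesis
      using insert by blast
  next
    case False
    let ?w' = "flip w k"
    have "k < n"
      using insert.prems(1) active_dirs_subset by blast
    then have w': "?w' < 2 ^ n"
      using insert.prems(2) by (rule flip_less_power[rotated])
    have "{j. bit v j \<noteq> bit ?w' j} \<subseteq> F"
      using insert.prems(3) False by (auto simp: bit_flip_iff)
    then have IH: "active_dirs n c ?w' = active_dirs n c v"
      using insert w' by blast
    have "k \<in> active_dirs n c ?w'"
      using IH insert.prems(1) by blast
    then have "active_dirs n c (flip ?w' k) = active_dirs n c ?w'"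
      by (rule active_dirs_flip[OF adm w'])
    then show ?thesis
      using IH by simp
  qed
qed

lemma mem_subcube_self: "v < 2 ^ n \<Longrightarrow> v \<in> subcube n K v"
  by (simp add: subcube_def)

lemma subcube_eq_if_mem: "w \<in> subcube n K v \<Longrightarrow> subcube n K w = subcube n K v"
  unfolding subcube_def by blast

lemma flip_mem_subcube_iff: "v < 2 ^ n \<Longrightarrow> k < n \<Longrightarrow> flip v k \<in> subcube n K v \<longleftrightarrow> k \<in> K"
  unfolding subcube_def using flip_less_power[of v n k] by (auto simp: bit_flip_iff)

lemma active_dirs_subcube:
  assumes adm: "admissible n c" and v: "v < 2 ^ n" and w: "w \<in> subcube n (active_dirs n c v) v"
  shows "active_dirs n c w = active_dirs n c v"
proof (rule active_dirs_eq_if_differences_subset[OF adm _ order_refl])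
  show "finite (active_dirs n c v)"
    using active_dirs_subset by (rule finite_subset) simp
  show "w < 2 ^ n"
    using w by (simp add: subcube_def)
  then have "bit v j \<Longrightarrow> j < n" "bit w j \<Longrightarrow> j < n" for j
    using v by (simp_all add: less_power_iff_bits)
  then show "{j. bit v j \<noteq> bit w j} \<subseteq> active_dirs n c v"
    using w unfolding subcube_def by auto
qed

lemma subcube_active_dirs_eq:
  assumes "admissible n c" and "v < 2 ^ n" and w: "w \<in> subcube n (active_dirs n c v) v"
  shows "subcube n (active_dirs n c w) w = subcube n (active_dirs n c v) v"
  using active_dirs_subcube[OF assms] subcube_eq_if_mem[OF w] by simp

definition active_cubes :: "nat \<Rightarrow> (nat set \<Rightarrow> complex) \<Rightarrow> (nat set \<times> nat) set" where
  "active_cubes n c = (\<lambda>v. (active_dirs n c v, v)) ` (Uc n c \<union> Vc n c)"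

lemma mem_active_cubesD:
  "(K, a) \<in> active_cubes n c \<Longrightarrow> K = active_dirs n c a \<and> a < 2 ^ n \<and> K \<noteq> {}"
  by (auto simp: active_cubes_def Uc_Un_Vc_eq)

lemma active_cubes_bounded: "(K, a) \<in> active_cubes n c \<Longrightarrow> K \<subseteq> {..<n} \<and> a < 2 ^ n"
  using mem_active_cubesD active_dirs_subset by blast

lemma active_cubes_disjoint:
  assumes adm: "admissible n c" and "(K, a) \<in> active_cubes n c" and "(K', a') \<in> active_cubes n c"
    and "subcube n K a \<noteq> subcube n K' a'"
  shows "subcube n K a \<inter> subcube n K' a' = {}"
proof (rule ccontr)
  assume "subcube n K a \<inter> subcube n K' a' \<noteq> {}"
  then obtain w where "w \<in> subcube n K a" "w \<in> subcube n K' a'"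
    by blast
  then have "subcube n K a = subcube n (active_dirs n c w) w"
    and "subcube n K' a' = subcube n (active_dirs n c w) w"
    using subcube_active_dirs_eq[OF adm] mem_active_cubesD assms(2,3) by metis+
  then show False
    using assms(4) by simp
qed

lemma Union_active_cubes:
  assumes adm: "admissible n c"
  shows "Uc n c \<union> Vc n c = (\<Union>(K, a) \<in> active_cubes n c. subcube n K a)"
proof
  show "Uc n c \<union> Vc n c \<subseteq> (\<Union>(K, a) \<in> active_cubes n c. subcube n K a)"
  proof
    fix v
    assume "v \<in> Uc n c \<union> Vc n c"
    then have "(active_dirs n c v, v) \<in> active_cubes n c" and "v < 2 ^ n"
      by (auto simp: active_cubes_def Uc_Un_Vc_eq)
    then show "v \<in> (\<Union>(K, a) \<in> active_cubes n c. subcube n K a)"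
      using mem_subcube_self by blast
  qed
  show "(\<Union>(K, a) \<in> active_cubes n c. subcube n K a) \<subseteq> Uc n c \<union> Vc n c"
  proof
    fix w
    assume "w \<in> (\<Union>(K, a) \<in> active_cubes n c. subcube n K a)"
    then obtain a where a: "(active_dirs n c a, a) \<in> active_cubes n c"
      and w: "w \<in> subcube n (active_dirs n c a) a"
      using mem_active_cubesD by blast
    then have "active_dirs n c w \<noteq> {}"
      using active_dirs_subcube[OF adm] mem_active_cubesD by metis
    moreover have "w < 2 ^ n"
      using w by (simp add: subcube_def)
    ultimately show "w \<in> Uc n c \<union> Vc n c"
      by (simp add: Uc_Un_Vc_eq)
  qed
qed

lemma Union_active_cubes_edges:
  assumes adm: "admissible n c"
  shows "Ec n c = (\<Union>(K, a) \<in> active_cubes n c. ind_edges n (subcube n K a))"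
proof
  show "Ec n c \<subseteq> (\<Union>(K, a) \<in> active_cubes n c. ind_edges n (subcube n K a))"
  proof
    fix e
    assume "e \<in> Ec n c"
    then obtain a k where e: "e \<in> Ed n" "c e \<noteq> 0" and e_eq: "e = {a, flip a k}"
      and a: "a < 2 ^ n" and k: "k < n"
      by (auto simp: Ec_def mem_Ed_iff)
    then have "k \<in> active_dirs n c a"
      by (simp add: active_dirs_def)
    then have "(active_dirs n c a, a) \<in> active_cubes n c"
      using a unfolding active_cubes_def Uc_Un_Vc_eq by blast
    moreover have "e \<subseteq> subcube n (active_dirs n c a) a"
      using e_eq mem_subcube_self[OF a] flip_mem_subcube_iff[OF a k] \<open>k \<in> active_dirs n c a\<close>
      by simp
    ultimately show "e \<in> (\<Union>(K, a) \<in> active_cubes n c. ind_edges n (subcube n K a))"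
      using e(1) unfolding ind_edges_def by blast
  qed
  show "(\<Union>(K, a) \<in> active_cubes n c. ind_edges n (subcube n K a)) \<subseteq> Ec n c"
  proof
    fix e
    assume "e \<in> (\<Union>(K, a) \<in> active_cubes n c. ind_edges n (subcube n K a))"
    then obtain v where "(active_dirs n c v, v) \<in> active_cubes n c"
      and e: "e \<in> Ed n" "e \<subseteq> subcube n (active_dirs n c v) v"
      unfolding ind_edges_def using mem_active_cubesD by blast
    then have v: "v < 2 ^ n"
      using mem_active_cubesD by blast
    obtain a k where a: "a < 2 ^ n" and k: "k < n" and e_eq: "e = {a, flip a k}"
      using e(1) by (auto simp: mem_Ed_iff)
    have "subcube n (active_dirs n c a) a = subcube n (active_dirs n c v) v"
      using subcube_active_dirs_eq[OF adm v] e(2) e_eq by simp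
    then have "flip a k \<in> subcube n (active_dirs n c a) a"
      using e(2) e_eq by simp
    then have "k \<in> active_dirs n c a"
      using flip_mem_subcube_iff[OF a k] by blast
    then show "e \<in> Ec n c"
      using e(1) e_eq by (simp add: Ec_def active_dirs_def)
  qed
qed

theorem lemma4p2:
  fixes n :: nat and c :: "nat set \<Rightarrow> complex"
  assumes "n \<ge> 2" and "admissible n c"
  shows "(\<forall>x1 x2 y1 y2.
            distinct [x1, x2, y1, y2] \<and>
            adj n x1 y1 \<and> adj n y1 x2 \<and> adj n x2 y2 \<and> adj n y2 x1 \<and>
            c {x1, y1} \<noteq> 0 \<and> c {y1, x2} \<noteq> 0 \<longrightarrow>
              c {x2, y2} \<noteq> 0 \<and> c {y2, x1} \<noteq> 0 \<and>
              c {x1, y1} / c {y1, x2} = - cnj (c {x2, y2} / c {y2, x1}) \<and>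
              cmod (c {x1, y1}) = cmod (c {x2, y2}) \<and>
              cmod (c {y1, x2}) = cmod (c {y2, x1}))
       \<and> (\<exists>\<C> :: (nat set \<times> nat) set.
            (\<forall>(K, a) \<in> \<C>. K \<subseteq> {..<n} \<and> a < 2 ^ n) \<and>
            (\<forall>(K, a) \<in> \<C>. \<forall>(K', a') \<in> \<C>.
               subcube n K a \<noteq> subcube n K' a' \<longrightarrow> subcube n K a \<inter> subcube n K' a' = {}) \<and>
            Uc n c \<union> Vc n c = (\<Union>(K, a) \<in> \<C>. subcube n K a) \<and>
            Ec n c = (\<Union>(K, a) \<in> \<C>. ind_edges n (subcube n K a)))"
  using admissible_four_cycle[OF assms(2)] active_cubes_bounded
    active_cubes_disjoint[OF assms(2)] Union_active_cubes[OF assms(2)]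
    Union_active_cubes_edges[OF assms(2)]
  by (intro conjI exI[of _ "active_cubes n c"]) blast+

end
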